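(* Let $\pi\ge1$. For every input $\sigma=(g_1,\dots,g_T)\in\Sigma$ and every threshold $p\in[m,M]$, the outputs $\bar v_t$ of CR-Pursuit($\pi$) satisfy $$\sum_{t\in[T]:\ p(t)\le p} g_t(\bar v_t)\ \le\ \frac{1}{\pi}\,p\,\Delta,$$ where $p(t)=g_t'(0)$.
   Context: Fix $\Delta>0$ and $0<m\le M$. Let $\mathcal G$ be the family of all functions $g:[0,\Delta]\to\mathbb{R}$ that are concave, increasing and differentiable on $[0,\Delta]$ with $g(0)=0$ and $g'(0)\in[m,M]$. An input is a finite sequence $\sigma=(g_1,\dots,g_T)$, $T\ge1$, $g_t\in\mathcal G$; $\Sigma$ is the set of all inputs; $\sigma^{[1:t]}=(g_1,\dots,g_t)$ ($\sigma^{[1:0]}$ empty). $\eta_{OPT}(\sigma^{[1:t]})$ is the optimal value of $\max\sum_{s=1}^t g_s(v_s)$ s.t. $\sum_{s=1}^t v_s\le\Delta$, $v_s\ge0$ (and $0$ for the empty sequence). For $\pi\ge1$, CR-Pursuit($\pi$) outputs at time $t$ the smallest $\bar v_t\in[0,\Delta]$ with $g_t(\bar v_t)=\frac1\pi\big[\eta_{OPT}(\sigma^{[1:t]})-\eta_{OPT}(\sigma^{[1:t-1]})\big]$. *)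

theory Defs
  imports "HOL-Analysis.Analysis"
begin

definition slope0 :: "real \<Rightarrow> (real \<Rightarrow> real) \<Rightarrow> real" where
  "slope0 \<Delta> g = (THE d. (g has_real_derivative d) (at 0 within {0..\<Delta>}))"

definition inG :: "real \<Rightarrow> real \<Rightarrow> real \<Rightarrow> (real \<Rightarrow> real) \<Rightarrow> bool" where
  "inG \<Delta> m M g \<longleftrightarrow>
     concave_on {0..\<Delta>} g \<and> mono_on {0..\<Delta>} g \<and>
     (\<forall>x\<in>{0..\<Delta>}. g differentiable (at x within {0..\<Delta>})) \<and>
     g 0 = 0 \<and>
     (\<exists>d. (g has_real_derivative d) (at 0 within {0..\<Delta>}) \<and> m \<le> d \<and> d \<le> M)"

definition eta_opt :: "real \<Rightarrow> (nat \<Rightarrow> real \<Rightarrow> real) \<Rightarrow> nat \<Rightarrow> real" where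
  "eta_opt \<Delta> g t = Sup {(\<Sum>s\<in>{1..t}. g s (v s)) | v.
       (\<forall>s\<in>{1..t}. 0 \<le> v s) \<and> (\<Sum>s\<in>{1..t}. v s) \<le> \<Delta>}"

definition cr_pursuit :: "real \<Rightarrow> real \<Rightarrow> (nat \<Rightarrow> real \<Rightarrow> real) \<Rightarrow> nat \<Rightarrow> real" where
  "cr_pursuit \<pi> \<Delta> g t = (LEAST v. v \<in> {0..\<Delta>} \<and>
       g t v = (eta_opt \<Delta> g t - eta_opt \<Delta> g (t - 1)) / \<pi>)"

end

theory Submission imports Defs begin

text \<open>
  Let \<open>H\<^sub>t\<close> (\<open>slack_opt\<close> below) be the prefix optimum when unused budget is worth \<open>p\<close> per
  unit, i.e. the optimum with an additional item \<open>x \<mapsto> p x\<close>. Concavity gives diminishing returns: appending an item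
  raises \<open>H\<close> by at most as much as it raises \<open>\<eta>\<^sub>O\<^sub>P\<^sub>T\<close>, and an item with \<open>g\<^sub>t'(0) \<le> p\<close> lies below
  the line \<open>p x\<close> and does not raise \<open>H\<close> at all. Hence the increments of \<open>\<eta>\<^sub>O\<^sub>P\<^sub>T\<close> at such items
  add up to at most \<open>(\<eta>\<^sub>O\<^sub>P\<^sub>T - H)(T) + H(0) \<le> p \<Delta>\<close>, and CR-Pursuit gains exactly the increment
  divided by \<open>\<pi>\<close> at every step.
\<close>

lemma slope0_eqI:
  assumes "0 < \<Delta>" and "(f has_real_derivative d) (at 0 within {0..\<Delta>})"
  shows "slope0 \<Delta> f = d"
  unfolding slope0_def
proof (rule the_equality)
  have "at (0::real) within {0..\<Delta>} \<noteq> bot"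
    using assms(1) by (simp add: at_within_Icc_at_right)
  then show "e = d" if "(f has_real_derivative e) (at 0 within {0..\<Delta>})" for e
    using has_field_derivative_unique that assms(2) by blast
qed (fact assms(2))

lemma concave_on_le_right_tangent:
  fixes f :: "real \<Rightarrow> real"
  assumes conc: "concave_on {a..b} f" and "a < b"
    and der: "(f has_real_derivative d) (at a within {a..b})" and x: "x \<in> {a..b}"
  shows "f x \<le> f a + d * (x - a)"
proof (cases "x = a")
  case False
  with x have "a < x" by simp
  have lim: "((\<lambda>y. (f y - f a) / (y - a)) \<longlongrightarrow> d) (at_right a)"
    using der \<open>a < b\<close> by (simp add: has_field_derivative_iff at_within_Icc_at_right)
  have "eventually (\<lambda>y. (f x - f a) / (x - a) \<le> (f y - f a) / (y - a)) (at_right a)"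
  proof (rule eventually_mono[OF eventually_at_right_real[OF \<open>a < x\<close>]])
    fix y assume y: "y \<in> {a<..<x}"
    have "concave_on {a..x} f"
      using conc x unfolding concave_on_def by (auto intro: convex_on_subset)
    then have "(f x - f a) / (x - a) * (y - a) + f a \<le> f y"
      using concave_onD_Icc'[of a x f y] y by simp
    then show "(f x - f a) / (x - a) \<le> (f y - f a) / (y - a)"
      using y by (simp add: field_simps)
  qed
  then have "(f x - f a) / (x - a) \<le> d"
    by (rule tendsto_lowerbound[OF lim]) simp
  then show ?thesis
    using \<open>a < x\<close> by (simp add: field_simps)
qed simp

lemma Least_preimage_Icc:
  fixes f :: "real \<Rightarrow> real"
  assumes cont: "continuous_on {a..b} f" and "a \<le> b" "f a \<le> c" "c \<le> f b"
  shows "(LEAST v. v \<in> {a..b} \<and> f v = c) \<in> {a..b} \<and> f (LEAST v. v \<in> {a..b} \<and> f v = c) = c"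
proof -
  define Z where "Z = {v \<in> {a..b}. f v = c}"
  have "Z \<noteq> {}"
    using IVT'[of f a c b] assms by (auto simp: Z_def)
  moreover have "bdd_below Z" "closed Z"
    using continuous_closed_preimage_constant[OF cont] by (auto simp: Z_def bdd_below_def)
  ultimately have "Inf Z \<in> Z"
    by (rule closed_contains_Inf)
  moreover have "(LEAST v. v \<in> Z) = Inf Z"
    using \<open>Inf Z \<in> Z\<close> \<open>bdd_below Z\<close> by (intro Least_equality cInf_lower)
  ultimately show ?thesis
    by (simp add: Z_def)
qed

lemma concave_on_add_le_swapped_mixtures:
  fixes x y :: "'a::real_vector"
  assumes "concave_on S f" "x \<in> S" "y \<in> S" "0 \<le> \<theta>" "\<theta> \<le> 1"
  shows "f x + f y \<le> f ((1 - \<theta>) *\<^sub>R x + \<theta> *\<^sub>R y) + f (\<theta> *\<^sub>R x + (1 - \<theta>) *\<^sub>R y)"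
proof -
  have "(1 - \<theta>) * f x + \<theta> * f y \<le> f ((1 - \<theta>) *\<^sub>R x + \<theta> *\<^sub>R y)"
    and "(1 - \<theta>) * f y + \<theta> * f x \<le> f ((1 - \<theta>) *\<^sub>R y + \<theta> *\<^sub>R x)"
    using concave_onD[OF assms(1)] assms(2-) by blast+
  then show ?thesis
    by (simp add: algebra_simps)
qed

lemma exchange_weight_exists:
  fixes A B a \<Delta> :: real
  assumes "0 \<le> a" "A + a \<le> \<Delta>" "B \<le> \<Delta>"
  obtains \<theta> where "0 \<le> \<theta>" "\<theta> \<le> 1" "(1 - \<theta>) * B + \<theta> * A + a \<le> \<Delta>"
    "\<theta> * B + (1 - \<theta>) * A \<le> A + a"
proof (cases "B + a \<le> \<Delta>")
  case True
  with assms(1) show ?thesis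
    by (intro that[of 0]) simp_all
next
  case False
  define \<theta> where "\<theta> = (B + a - \<Delta>) / (B - A)"
  have "B - A > 0"
    using False assms by simp
  then have "\<theta> * (B - A) = B + a - \<Delta>"
    by (simp add: \<theta>_def)
  moreover have "0 \<le> \<theta>" "\<theta> \<le> 1"
    using False assms \<open>B - A > 0\<close> by (simp_all add: \<theta>_def divide_le_eq_1)
  ultimately show ?thesis
    using assms by (intro that[of \<theta>]) (simp_all add: algebra_simps)
qed

definition feasible :: "real \<Rightarrow> nat \<Rightarrow> (nat \<Rightarrow> real) \<Rightarrow> bool" where
  "feasible \<Delta> t v \<longleftrightarrow> (\<forall>s\<in>{1..t}. 0 \<le> v s) \<and> (\<Sum>s\<in>{1..t}. v s) \<le> \<Delta>"

definition total_value :: "(nat \<Rightarrow> real \<Rightarrow> real) \<Rightarrow> nat \<Rightarrow> (nat \<Rightarrow> real) \<Rightarrow> real" where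
  "total_value g t v = (\<Sum>s\<in>{1..t}. g s (v s))"

definition slack_opt :: "real \<Rightarrow> real \<Rightarrow> (nat \<Rightarrow> real \<Rightarrow> real) \<Rightarrow> nat \<Rightarrow> real" where
  "slack_opt \<Delta> p g t =
     Sup {total_value g t v + p * (\<Delta> - (\<Sum>s\<in>{1..t}. v s)) | v. feasible \<Delta> t v}"

lemma eta_opt_eq_Sup_feasible: "eta_opt \<Delta> g t = Sup {total_value g t v | v. feasible \<Delta> t v}"
  unfolding eta_opt_def total_value_def feasible_def by simp

lemma feasible_bounds: "feasible \<Delta> t v \<Longrightarrow> s \<in> {1..t} \<Longrightarrow> v s \<in> {0..\<Delta>}"
  using member_le_sum[of s "{1..t}" v] by (fastforce simp: feasible_def)

lemma feasible_sum_nonneg: "feasible \<Delta> t v \<Longrightarrow> 0 \<le> (\<Sum>s\<in>{1..t}. v s)"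
  by (rule sum_nonneg) (auto simp: feasible_def)

lemma feasible_zero: "0 \<le> \<Delta> \<Longrightarrow> feasible \<Delta> t (\<lambda>_. 0)"
  by (simp add: feasible_def)

lemma feasible_SucD:
  assumes "feasible \<Delta> (Suc n) v"
  shows "feasible \<Delta> n v"
proof -
  have "0 \<le> v (Suc n)" and "(\<Sum>s\<in>{1..n}. v s) + v (Suc n) \<le> \<Delta>"
    using assms by (auto simp: feasible_def)
  then have "(\<Sum>s\<in>{1..n}. v s) \<le> \<Delta>"
    by linarith
  with assms show ?thesis
    by (simp add: feasible_def)
qed

lemma feasible_Suc_extend:
  "feasible \<Delta> n v \<Longrightarrow> 0 \<le> x \<Longrightarrow> (\<Sum>s\<in>{1..n}. v s) + x \<le> \<Delta> \<Longrightarrow>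
     feasible \<Delta> (Suc n) (v(Suc n := x))"
  by (auto simp: feasible_def le_Suc_eq)

lemma total_value_Suc: "total_value g (Suc n) v = total_value g n v + g (Suc n) (v (Suc n))"
  by (simp add: total_value_def)

lemma total_value_Suc_extend:
  "total_value g (Suc n) (v(Suc n := x)) = total_value g n v + g (Suc n) x"
  by (simp add: total_value_def)

locale concave_items =
  fixes \<Delta> :: real and T :: nat and g :: "nat \<Rightarrow> real \<Rightarrow> real"
  assumes budget_nonneg: "0 \<le> \<Delta>"
    and item_concave: "\<And>t. t \<in> {1..T} \<Longrightarrow> concave_on {0..\<Delta>} (g t)"
    and item_mono: "\<And>t. t \<in> {1..T} \<Longrightarrow> mono_on {0..\<Delta>} (g t)"
    and item_zero: "\<And>t. t \<in> {1..T} \<Longrightarrow> g t 0 = 0"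
begin

abbreviation opt :: "nat \<Rightarrow> real" where
  "opt t \<equiv> eta_opt \<Delta> g t"

abbreviation slack :: "real \<Rightarrow> nat \<Rightarrow> real" where
  "slack p t \<equiv> slack_opt \<Delta> p g t"

lemma total_value_le: "t \<le> T \<Longrightarrow> feasible \<Delta> t v \<Longrightarrow> total_value g t v \<le> (\<Sum>s\<in>{1..t}. g s \<Delta>)"
  unfolding total_value_def
  by (intro sum_mono mono_onD[OF item_mono]) (use budget_nonneg feasible_bounds in auto)

lemma opt_upper: "t \<le> T \<Longrightarrow> feasible \<Delta> t v \<Longrightarrow> total_value g t v \<le> opt t"
  unfolding eta_opt_eq_Sup_feasible
  by (rule cSup_upper) (use total_value_le in \<open>auto intro!: bdd_aboveI\<close>)

lemma slack_upper:
  assumes "0 \<le> p" "t \<le> T" "feasible \<Delta> t v"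
  shows "total_value g t v + p * (\<Delta> - (\<Sum>s\<in>{1..t}. v s)) \<le> slack p t"
  unfolding slack_opt_def
proof (rule cSup_upper)
  have "total_value g t w + p * (\<Delta> - (\<Sum>s\<in>{1..t}. w s)) \<le> (\<Sum>s\<in>{1..t}. g s \<Delta>) + p * \<Delta>"
    if "feasible \<Delta> t w" for w
    using total_value_le[OF \<open>t \<le> T\<close> that] mult_nonneg_nonneg[OF \<open>0 \<le> p\<close> feasible_sum_nonneg[OF that]]
    by (simp add: algebra_simps)
  then show "bdd_above {total_value g t w + p * (\<Delta> - (\<Sum>s\<in>{1..t}. w s)) | w. feasible \<Delta> t w}"
    by (auto intro!: bdd_aboveI)
qed (use assms in blast)

lemma opt_least: "(\<And>v. feasible \<Delta> t v \<Longrightarrow> total_value g t v \<le> z) \<Longrightarrow> opt t \<le> z"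
  unfolding eta_opt_eq_Sup_feasible
  by (rule cSup_least) (use feasible_zero[OF budget_nonneg] in auto)

lemma slack_least:
  "(\<And>v. feasible \<Delta> t v \<Longrightarrow> total_value g t v + p * (\<Delta> - (\<Sum>s\<in>{1..t}. v s)) \<le> z) \<Longrightarrow>
     slack p t \<le> z"
  unfolding slack_opt_def
  by (rule cSup_least) (use feasible_zero[OF budget_nonneg] in auto)

lemma opt_0: "opt 0 = 0"
  using feasible_zero[OF budget_nonneg]
  by (simp add: eta_opt_eq_Sup_feasible total_value_def feasible_def)

lemma slack_0: "slack p 0 = p * \<Delta>"
proof -
  have "{total_value g 0 v + p * (\<Delta> - (\<Sum>s\<in>{1..0}. v s)) | v. feasible \<Delta> 0 v} = {p * \<Delta>}"
    using budget_nonneg by (auto simp: total_value_def feasible_def)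
  then show ?thesis
    by (simp add: slack_opt_def)
qed

lemma opt_le_slack: "0 \<le> p \<Longrightarrow> t \<le> T \<Longrightarrow> opt t \<le> slack p t"
  by (rule opt_least, rule order_trans[OF _ slack_upper])
    (auto simp: feasible_def)

lemma opt_increment_nonneg:
  assumes "Suc n \<le> T"
  shows "opt n \<le> opt (Suc n)"
proof (rule opt_least)
  fix v assume "feasible \<Delta> n v"
  then have "total_value g (Suc n) (v(Suc n := 0)) \<le> opt (Suc n)"
    using assms by (intro opt_upper feasible_Suc_extend) (auto simp: feasible_def)
  then show "total_value g n v \<le> opt (Suc n)"
    using item_zero assms by (simp add: total_value_Suc_extend)
qed

lemma opt_increment_le:
  assumes "Suc n \<le> T"
  shows "opt (Suc n) \<le> opt n + g (Suc n) \<Delta>"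
proof (rule opt_least)
  fix v assume v: "feasible \<Delta> (Suc n) v"
  have "total_value g n v \<le> opt n"
    using assms by (intro opt_upper feasible_SucD[OF v]) simp
  moreover have "g (Suc n) (v (Suc n)) \<le> g (Suc n) \<Delta>"
    using assms feasible_bounds[OF v, of "Suc n"] budget_nonneg
    by (intro mono_onD[OF item_mono]) auto
  ultimately show "total_value g (Suc n) v \<le> opt n + g (Suc n) \<Delta>"
    by (simp add: total_value_Suc)
qed

lemma slack_Suc_le_if_dominated:
  assumes "0 \<le> p" "Suc n \<le> T" and dominated: "\<And>x. x \<in> {0..\<Delta>} \<Longrightarrow> g (Suc n) x \<le> p * x"
  shows "slack p (Suc n) \<le> slack p n"
proof (rule slack_least)
  fix v assume v: "feasible \<Delta> (Suc n) v"
  have "g (Suc n) (v (Suc n)) \<le> p * v (Suc n)"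
    using dominated feasible_bounds[OF v] by simp
  then have "total_value g (Suc n) v + p * (\<Delta> - (\<Sum>s\<in>{1..Suc n}. v s))
      \<le> total_value g n v + p * (\<Delta> - (\<Sum>s\<in>{1..n}. v s))"
    by (simp add: total_value_Suc algebra_simps)
  also have "\<dots> \<le> slack p n"
    using assms by (intro slack_upper feasible_SucD[OF v]) simp_all
  finally show "total_value g (Suc n) v + p * (\<Delta> - (\<Sum>s\<in>{1..Suc n}. v s)) \<le> slack p n" .
qed

text \<open>Exchange argument: the items before \<open>Suc n\<close> of an allocation for \<open>Suc n\<close> and of one for
  \<open>n\<close> are mixed with weights \<open>1 - \<theta>, \<theta>\<close> and \<open>\<theta>, 1 - \<theta>\<close>, which by concavity does not
  decrease the total value; \<open>\<theta>\<close> is chosen so that both mixtures stay within budget.\<close>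

lemma exchange_bound:
  assumes "0 \<le> p" "Suc n \<le> T" and a: "feasible \<Delta> (Suc n) a" and b: "feasible \<Delta> n b"
  shows "total_value g (Suc n) a + p * (\<Delta> - (\<Sum>s\<in>{1..Suc n}. a s)) + total_value g n b
           \<le> opt (Suc n) + slack p n"
proof -
  define A B where "A = (\<Sum>s\<in>{1..n}. a s)" and "B = (\<Sum>s\<in>{1..n}. b s)"
  have "0 \<le> a (Suc n)" "A + a (Suc n) \<le> \<Delta>" "B \<le> \<Delta>"
    using a b by (auto simp: feasible_def A_def B_def)
  then obtain \<theta> where \<theta>: "0 \<le> \<theta>" "\<theta> \<le> 1" "(1 - \<theta>) * B + \<theta> * A + a (Suc n) \<le> \<Delta>"
      "\<theta> * B + (1 - \<theta>) * A \<le> A + a (Suc n)"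
    by (rule exchange_weight_exists)
  define c d where "c = (\<lambda>s. (1 - \<theta>) * b s + \<theta> * a s)" and "d = (\<lambda>s. \<theta> * b s + (1 - \<theta>) * a s)"
  have sum_c: "(\<Sum>s\<in>{1..n}. c s) = (1 - \<theta>) * B + \<theta> * A"
    and sum_d: "(\<Sum>s\<in>{1..n}. d s) = \<theta> * B + (1 - \<theta>) * A"
    by (simp_all add: c_def d_def A_def B_def sum.distrib sum_distrib_left)
  have ab: "a s \<in> {0..\<Delta>}" "b s \<in> {0..\<Delta>}" if "s \<in> {1..n}" for s
    using feasible_bounds[OF a] feasible_bounds[OF b] that by auto
  have "feasible \<Delta> n c" "feasible \<Delta> n d"
    using ab \<theta> \<open>0 \<le> a (Suc n)\<close> \<open>A + a (Suc n) \<le> \<Delta>\<close> sum_c sum_d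
    by (auto simp: feasible_def c_def d_def)
  then have c': "feasible \<Delta> (Suc n) (c(Suc n := a (Suc n)))"
    using \<theta> \<open>0 \<le> a (Suc n)\<close> sum_c by (intro feasible_Suc_extend) auto
  have mix: "total_value g n a + total_value g n b \<le> total_value g n c + total_value g n d"
  proof -
    have "g s (a s) + g s (b s) \<le> g s (c s) + g s (d s)" if "s \<in> {1..n}" for s
      using concave_on_add_le_swapped_mixtures[OF item_concave ab(2,1) \<theta>(1,2), of s] that assms(2)
      by (simp add: c_def d_def add.commute)
    then show ?thesis
      unfolding total_value_def sum.distrib[symmetric] by (rule sum_mono)
  qed
  have "total_value g (Suc n) a + p * (\<Delta> - (\<Sum>s\<in>{1..Suc n}. a s)) + total_value g n b
      = total_value g n a + total_value g n b + g (Suc n) (a (Suc n)) + p * (\<Delta> - A - a (Suc n))"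
    by (simp add: total_value_Suc A_def)
  also have "\<dots> \<le> total_value g (Suc n) (c(Suc n := a (Suc n)))
                  + (total_value g n d + p * (\<Delta> - (\<Sum>s\<in>{1..n}. d s)))"
    using mix mult_left_mono[OF _ \<open>0 \<le> p\<close>, of "\<Delta> - A - a (Suc n)" "\<Delta> - (\<Sum>s\<in>{1..n}. d s)"]
      sum_d \<theta>(4)
    by (simp add: total_value_Suc_extend)
  also have "\<dots> \<le> opt (Suc n) + slack p n"
    using assms c' \<open>feasible \<Delta> n d\<close> by (intro add_mono opt_upper slack_upper) simp_all
  finally show ?thesis .
qed

lemma slack_increment_le_opt_increment:
  assumes "0 \<le> p" "Suc n \<le> T"
  shows "slack p (Suc n) - slack p n \<le> opt (Suc n) - opt n"
proof -
  have "opt n \<le> opt (Suc n) + slack p n - slack p (Suc n)"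
  proof (rule opt_least)
    fix b assume "feasible \<Delta> n b"
    then have "slack p (Suc n) \<le> opt (Suc n) + slack p n - total_value g n b"
      using exchange_bound[OF assms] by (intro slack_least) force
    then show "total_value g n b \<le> opt (Suc n) + slack p n - slack p (Suc n)"
      by linarith
  qed
  then show ?thesis
    by linarith
qed

lemma sum_dominated_increments_le_gap:
  assumes "0 \<le> p" "n \<le> T"
    and dominated: "\<And>t x. t \<in> {1..n} \<Longrightarrow> P t \<Longrightarrow> x \<in> {0..\<Delta>} \<Longrightarrow> g t x \<le> p * x"
  shows "(\<Sum>t\<in>{t\<in>{1..n}. P t}. opt t - opt (t - 1)) \<le> opt n - slack p n + p * \<Delta>"
  using assms(2,3)
proof (induction n)
  case 0
  show ?case
    by (simp add: opt_0 slack_0)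
next
  case (Suc n)
  have IH: "(\<Sum>t\<in>{t\<in>{1..n}. P t}. opt t - opt (t - 1)) \<le> opt n - slack p n + p * \<Delta>"
    using Suc by simp
  show ?case
  proof (cases "P (Suc n)")
    case True
    have "{t\<in>{1..Suc n}. P t} = insert (Suc n) {t\<in>{1..n}. P t}"
      using True by (auto simp: le_Suc_eq)
    moreover have "slack p (Suc n) \<le> slack p n"
      using Suc.prems True \<open>0 \<le> p\<close> by (intro slack_Suc_le_if_dominated) auto
    ultimately show ?thesis
      using IH by simp
  next
    case False
    then have "{t\<in>{1..Suc n}. P t} = {t\<in>{1..n}. P t}"
      by (auto simp: le_Suc_eq)
    then show ?thesis
      using IH slack_increment_le_opt_increment[OF \<open>0 \<le> p\<close> Suc.prems(1)] by simp
  qed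
qed

corollary sum_dominated_increments_le:
  assumes "0 \<le> p" "n \<le> T"
    and "\<And>t x. t \<in> {1..n} \<Longrightarrow> P t \<Longrightarrow> x \<in> {0..\<Delta>} \<Longrightarrow> g t x \<le> p * x"
  shows "(\<Sum>t\<in>{t\<in>{1..n}. P t}. opt t - opt (t - 1)) \<le> p * \<Delta>"
  using sum_dominated_increments_le_gap[where P = P, OF assms] opt_le_slack[OF assms(1,2)] by linarith

lemma cr_pursuit_value:
  assumes "1 \<le> \<pi>" "t \<in> {1..T}" and cont: "continuous_on {0..\<Delta>} (g t)"
  shows "g t (cr_pursuit \<pi> \<Delta> g t) = (opt t - opt (t - 1)) / \<pi>"
proof -
  obtain n where t: "t = Suc n" "Suc n \<le> T"
    using assms(2) by (cases t) auto
  define c where "c = (opt t - opt (t - 1)) / \<pi>"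
  have "0 \<le> opt t - opt (t - 1)"
    using opt_increment_nonneg[OF t(2)] t(1) by simp
  then have "0 \<le> c" "c \<le> opt t - opt (t - 1)"
    using assms(1) by (simp_all add: c_def divide_le_eq mult_le_cancel_left1)
  then have "g t 0 \<le> c" "c \<le> g t \<Delta>"
    using opt_increment_le[OF t(2)] item_zero[OF assms(2)] t(1) by simp_all
  then show ?thesis
    using Least_preimage_Icc[OF cont budget_nonneg] by (simp add: cr_pursuit_def c_def)
qed

end

theorem lemma10:
  fixes \<Delta> m M \<pi> p :: real and T :: nat and g :: "nat \<Rightarrow> real \<Rightarrow> real"
  assumes "\<Delta> > 0" and "0 < m" and "m \<le> M"
    and "\<pi> \<ge> 1"
    and "T \<ge> 1"
    and "\<forall>t\<in>{1..T}. inG \<Delta> m M (g t)"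
    and "m \<le> p" and "p \<le> M"
  shows "(\<Sum>t\<in>{t\<in>{1..T}. slope0 \<Delta> (g t) \<le> p}. g t (cr_pursuit \<pi> \<Delta> g t))
           \<le> p * \<Delta> / \<pi>"
proof -
  interpret concave_items \<Delta> T g
    using assms(1,6) by unfold_locales (auto simp: inG_def)
  have cont: "continuous_on {0..\<Delta>} (g t)" if "t \<in> {1..T}" for t
  proof -
    have "inG \<Delta> m M (g t)"
      using assms(6) that by blast
    then show ?thesis
      unfolding inG_def by (metis differentiable_imp_continuous_on differentiable_on_def)
  qed
  have dominated: "g t x \<le> p * x" if "t \<in> {1..T}" "slope0 \<Delta> (g t) \<le> p" "x \<in> {0..\<Delta>}" for t x
  proof -
    have "inG \<Delta> m M (g t)"
      using assms(6) that(1) by blast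
    then obtain d where d: "(g t has_real_derivative d) (at 0 within {0..\<Delta>})"
      unfolding inG_def by blast
    have "g t x \<le> d * x"
      using concave_on_le_right_tangent[OF item_concave[OF that(1)] assms(1) d that(3)]
        item_zero[OF that(1)] by simp
    also have "\<dots> \<le> p * x"
      using slope0_eqI[OF assms(1) d] that by (simp add: mult_right_mono)
    finally show ?thesis .
  qed
  have "(\<Sum>t\<in>{t\<in>{1..T}. slope0 \<Delta> (g t) \<le> p}. g t (cr_pursuit \<pi> \<Delta> g t))
      = (\<Sum>t\<in>{t\<in>{1..T}. slope0 \<Delta> (g t) \<le> p}. (opt t - opt (t - 1)) / \<pi>)"
    using cr_pursuit_value[OF assms(4) _ cont] by (intro sum.cong) auto
  also have "\<dots> = (\<Sum>t\<in>{t\<in>{1..T}. slope0 \<Delta> (g t) \<le> p}. opt t - opt (t - 1)) / \<pi>"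
    by (simp add: sum_divide_distrib)
  also have "\<dots> \<le> p * \<Delta> / \<pi>"
    using sum_dominated_increments_le[of p T "\<lambda>t. slope0 \<Delta> (g t) \<le> p"] dominated assms(2,4,7)
    by (intro divide_right_mono) simp_all
  finally show ?thesis .
qed

end
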